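(* Let $P$ be an $n\times n$ sign pattern. If there is a nilpotent matrix $A\in\mathcal{Q}(P)$ with the nSSP, then there is a nilpotent matrix $A'\in\mathcal{Q}(P)$ of index $n$ (i.e., $A'^{\,n-1}\neq O$) with the nSSP.
   Context: A sign pattern is an array with entries in $\{+,-,0\}$; its qualitative class $\mathcal{Q}(P)$ is the set of real matrices of the same size whose entries have the signs prescribed by $P$. $\circ$ is the entrywise product. A real $n\times n$ matrix $A$ has the nSSP if $X=O$ is the only real $n\times n$ matrix with $A\circ X=O$ and $AX^\top-X^\top A=O$. *)

theory Defs
  imports "HOL-Analysis.Analysis"
begin

datatype sign_entry = Pos | Neg | Zer

type_synonym 'n sign_pattern = "sign_entry ^ 'n ^ 'n"

definition has_sign :: "real \<Rightarrow> sign_entry \<Rightarrow> bool" where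
  "has_sign x s = (case s of Pos \<Rightarrow> x > 0 | Neg \<Rightarrow> x < 0 | Zer \<Rightarrow> x = 0)"

definition qual_class :: "'n::finite sign_pattern \<Rightarrow> (real ^ 'n ^ 'n) set" where
  "qual_class P = {A. \<forall>i j. has_sign (A $ i $ j) (P $ i $ j)}"

primrec matpow :: "real ^ 'n::finite ^ 'n \<Rightarrow> nat \<Rightarrow> real ^ 'n ^ 'n" where
  "matpow A 0 = mat 1"
| "matpow A (Suc k) = A ** matpow A k"

definition nilpotent_mat :: "real ^ 'n::finite ^ 'n \<Rightarrow> bool" where
  "nilpotent_mat A = (\<exists>k. matpow A k = 0)"

definition hadamard :: "real ^ 'n::finite ^ 'n \<Rightarrow> real ^ 'n ^ 'n \<Rightarrow> real ^ 'n ^ 'n" where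
  "hadamard A X = (\<chi> i j. A $ i $ j * X $ i $ j)"

definition nSSP :: "real ^ 'n::finite ^ 'n \<Rightarrow> bool" where
  "nSSP A = (\<forall>X. hadamard A X = 0 \<and> A ** transpose X - transpose X ** A = 0 \<longrightarrow> X = 0)"

end

theory Submission
  imports Defs
begin

text \<open>
  A nilpotent matrix A is strictly triangular in a suitable flag basis w. Adding t times the shift
  matrix of that basis keeps A + tM strictly triangular and turns its subdiagonal entries into
  a_j + t, which are all nonzero for all but finitely many t; then A + tM is nilpotent of index n.
  It remains to bring A + tM back into Q(P). The nSSP of A says exactly that the linearisation at
  0 of (t, K) \<mapsto> (I + K)(A + tM)(I + K)\<inverse>, restricted to the zero pattern of A, is onto (in K).
  By Sussmann's open mapping theorem, for small t > 0 some similarity (I + K)(A + tM)(I + K)\<inverse>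
  vanishes on the zero pattern of A and is close to A. Being close to A it has the sign pattern
  of A, and it inherits the nSSP, which is an open condition among matrices with a fixed zero
  pattern.
\<close>

lemma matrix_inv_right:
  fixes S :: "'a::semiring_1^'n^'n"
  assumes "invertible S"
  shows "S ** matrix_inv S = mat 1"
  using someI_ex[OF assms[unfolded invertible_def]] by (simp add: matrix_inv_def)

lemma matrix_inv_left:
  fixes S :: "'a::semiring_1^'n^'n"
  assumes "invertible S"
  shows "matrix_inv S ** S = mat 1"
  using someI_ex[OF assms[unfolded invertible_def]] by (simp add: matrix_inv_def)

lemma matrix_inv_mat_1: "matrix_inv (mat 1 :: 'a::semiring_1^'n^'n) = mat 1"
  using matrix_inv_right[of "mat 1 :: 'a^'n^'n"] by (simp add: invertible_def)

lemma matrix_add_rdistrib: "((A::'a::semiring_1^'n^'m) + B) ** C = A ** C + B ** C"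
  by (vector matrix_matrix_mult_def sum.distrib[symmetric] field_simps)

lemma bounded_bilinear_matrix_matrix_mult:
  "bounded_bilinear ((**) :: real^'n::finite^'n \<Rightarrow> real^'n^'n \<Rightarrow> real^'n^'n)"
  unfolding bilinear_conv_bounded_bilinear[symmetric] bilinear_def
  by (auto intro!: linearI simp: matrix_add_ldistrib matrix_add_rdistrib
      scalar_matrix_assoc[symmetric] matrix_scalar_ac)

interpretation matrix_mult: bounded_bilinear "(**) :: real^'n::finite^'n \<Rightarrow> real^'n^'n \<Rightarrow> real^'n^'n"
  by (rule bounded_bilinear_matrix_matrix_mult)

lemma matpow_conjugate:
  fixes S N :: "real^'n::finite^'n"
  assumes "invertible S"
  shows "matpow (S ** N ** matrix_inv S) k = S ** matpow N k ** matrix_inv S"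
proof (induction k)
  case 0
  show ?case using matrix_inv_right[OF assms] by simp
next
  case (Suc k)
  have "matpow (S ** N ** matrix_inv S) (Suc k)
      = S ** N ** (matrix_inv S ** S) ** matpow N k ** matrix_inv S"
    using Suc by (simp add: matrix_mul_assoc)
  then show ?case using matrix_inv_left[OF assms] by (simp add: matrix_mul_assoc)
qed

lemma conjugate_eq_0_iff:
  fixes S N :: "'a::semiring_1^'n^'n"
  assumes "invertible S"
  shows "S ** N ** matrix_inv S = 0 \<longleftrightarrow> N = 0"
proof
  assume "S ** N ** matrix_inv S = 0"
  then have "matrix_inv S ** (S ** N ** matrix_inv S) ** S = 0" by simp
  then have "(matrix_inv S ** S) ** N ** (matrix_inv S ** S) = 0"
    by (simp only: matrix_mul_assoc)
  then show "N = 0"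
    using matrix_inv_left[OF assms] by simp
qed simp

lemma matpow_Suc_mult_vector: "matpow A (Suc k) *v x = A *v (matpow A k *v x)"
  by (simp add: matrix_vector_mul_assoc)

definition flag_basis :: "(nat \<Rightarrow> real^'n::finite) \<Rightarrow> bool" where
  "flag_basis w \<longleftrightarrow> (\<forall>j<CARD('n). w j \<notin> span (w ` {..<j}))"

definition strictly_triangular :: "real^'n::finite^'n \<Rightarrow> (nat \<Rightarrow> real^'n) \<Rightarrow> bool" where
  "strictly_triangular N w \<longleftrightarrow> (\<forall>j<CARD('n). N *v w j \<in> span (w ` {..<j}))"

lemma nilpotent_leaves_subspace:
  fixes A :: "real^'n::finite^'n"
  assumes "subspace W" "u \<notin> W" "matpow A k = 0"
  shows "\<exists>v. v \<notin> W \<and> A *v v \<in> W"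
proof -
  define p where "p m = matpow A m *v u" for m
  have "\<exists>m. p m \<in> W" using assms by (auto simp: p_def intro!: exI[of _ k] subspace_0)
  define m where "m = (LEAST m. p m \<in> W)"
  have pm: "p m \<in> W" unfolding m_def using \<open>\<exists>m. p m \<in> W\<close> by (rule LeastI_ex)
  have "m \<noteq> 0" using pm assms(2) by (cases m) (auto simp: p_def)
  have "p (m - 1) \<notin> W"
  proof
    assume "p (m - 1) \<in> W"
    then have "m \<le> m - 1" unfolding m_def by (rule Least_le)
    with \<open>m \<noteq> 0\<close> show False by simp
  qed
  moreover have "A *v p (m - 1) = p m"
    using \<open>m \<noteq> 0\<close> by (cases m) (simp_all add: p_def matrix_vector_mul_assoc)
  ultimately show ?thesis using pm by metis
qed

lemma nilpotent_strictly_triangular: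
  fixes A :: "real^'n::finite^'n"
  assumes "matpow A k = 0"
  obtains w where "flag_basis w" "strictly_triangular A w"
proof -
  have "\<exists>w::nat \<Rightarrow> real^'n. \<forall>j<m. w j \<notin> span (w ` {..<j}) \<and> A *v w j \<in> span (w ` {..<j})"
    if "m \<le> CARD('n)" for m
    using that
  proof (induction m)
    case (Suc m)
    then obtain w where w: "\<forall>j<m. w j \<notin> span (w ` {..<j}) \<and> A *v w j \<in> span (w ` {..<j})"
      by auto
    have "span (w ` {..<m}) \<noteq> UNIV"
    proof
      assume "span (w ` {..<m}) = UNIV"
      then have "CARD('n) \<le> card (w ` {..<m})"
        using dim_le_card[of UNIV "w ` {..<m}"] by simp
      also have "\<dots> \<le> m" using card_image_le[of "{..<m}" w] by simp
      finally show False using Suc.prems by simp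
    qed
    then obtain v where v: "v \<notin> span (w ` {..<m})" "A *v v \<in> span (w ` {..<m})"
      using nilpotent_leaves_subspace[OF subspace_span _ assms] by blast
    define w' where "w' = w(m := v)"
    have prefix: "w' ` {..<j} = w ` {..<j}" if "j \<le> m" for j
      using that by (auto simp: w'_def)
    show ?case
    proof (intro exI[of _ w'] allI impI)
      fix j assume "j < Suc m"
      then show "w' j \<notin> span (w' ` {..<j}) \<and> A *v w' j \<in> span (w' ` {..<j})"
        using w v prefix[of j] by (cases "j = m") (auto simp: w'_def)
    qed
  qed simp
  then show thesis using that unfolding flag_basis_def strictly_triangular_def by blast
qed

lemma dim_flag_prefix:
  fixes w :: "nat \<Rightarrow> real^'n::finite"
  assumes "flag_basis w" "j \<le> CARD('n)"
  shows "dim (w ` {..<j}) = j"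
  using assms(2)
proof (induction j)
  case (Suc j)
  then show ?case
    using assms(1) by (simp add: flag_basis_def lessThan_Suc dim_insert)
qed simp

lemma span_flag_basis:
  fixes w :: "nat \<Rightarrow> real^'n::finite"
  assumes "flag_basis w"
  shows "span (w ` {..<CARD('n)}) = UNIV"
  using dim_flag_prefix[OF assms order_refl] by (simp add: dim_eq_full[symmetric])

lemma inj_on_flag_basis:
  fixes w :: "nat \<Rightarrow> real^'n::finite"
  assumes "flag_basis w"
  shows "inj_on w {..<CARD('n)}"
proof (rule inj_onI)
  have "w i \<noteq> w j" if "i < j" "j < CARD('n)" for i j
    using assms that span_base[of "w i" "w ` {..<j}"] by (auto simp: flag_basis_def)
  then show "i = j" if "i \<in> {..<CARD('n)}" "j \<in> {..<CARD('n)}" "w i = w j" for i j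
    using that by (metis lessThan_iff linorder_neqE_nat)
qed

lemma independent_flag_basis:
  fixes w :: "nat \<Rightarrow> real^'n::finite"
  assumes "flag_basis w"
  shows "independent (w ` {..<CARD('n)})"
  by (rule card_le_dim_spanning[of _ UNIV])
    (auto simp: span_flag_basis[OF assms] card_image[OF inj_on_flag_basis[OF assms]])

lemma shift_matrix_exists:
  fixes w :: "nat \<Rightarrow> real^'n::finite"
  assumes "flag_basis w"
  obtains M :: "real^'n^'n" where "\<forall>j<CARD('n). M *v w j = (if j = 0 then 0 else w (j - 1))"
proof -
  define f where "f x = (let j = inv_into {..<CARD('n)} w x in if j = 0 then 0 else w (j - 1))"
    for x
  obtain g where g: "linear g" "\<forall>x\<in>w ` {..<CARD('n)}. g x = f x"
    using linear_independent_extend[OF independent_flag_basis[OF assms]] by blast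
  have "j < CARD('n) \<Longrightarrow> f (w j) = (if j = 0 then 0 else w (j - 1))" for j
    unfolding f_def using inv_into_f_f[OF inj_on_flag_basis[OF assms]] by simp
  then show thesis
    using g by (intro that[of "matrix g"]) (simp add: matrix_works)
qed

lemma strictly_triangular_add_scaleR:
  assumes "strictly_triangular A w" "strictly_triangular M w"
  shows "strictly_triangular (A + t *\<^sub>R M) w"
  using assms
  by (simp add: strictly_triangular_def matrix_vector_mult_add_rdistrib
      scaleR_matrix_vector_assoc[symmetric] span_add span_scale)

lemma strictly_triangular_lowers_span:
  fixes w :: "nat \<Rightarrow> real^'n::finite"
  assumes "strictly_triangular N w" "j \<le> CARD('n)" "x \<in> span (w ` {..<j})"
  shows "N *v x \<in> span (w ` {..<j - 1})"
proof (rule span_induct[OF assms(3)])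
  show "subspace {x. N *v x \<in> span (w ` {..<j - 1})}"
    by (rule linear_subspace_linear_preimage[OF matrix_vector_mul_linear subspace_span])
  fix s assume "s \<in> w ` {..<j}"
  then obtain i where "i < j" "s = w i" by auto
  moreover have "span (w ` {..<i}) \<subseteq> span (w ` {..<j - 1})"
    using \<open>i < j\<close> by (intro span_mono image_mono) auto
  ultimately show "N *v s \<in> span (w ` {..<j - 1})"
    using assms(1,2) by (auto simp: strictly_triangular_def)
qed

lemma strictly_triangular_nilpotent:
  fixes w :: "nat \<Rightarrow> real^'n::finite"
  assumes "flag_basis w" "strictly_triangular N w"
  shows "matpow N CARD('n) = 0"
proof -
  have "matpow N k *v x \<in> span (w ` {..<CARD('n) - k})" for k x
  proof (induction k)
    case 0
    show ?case using span_flag_basis[OF assms(1)] by simp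
  next
    case (Suc k)
    have "N *v (matpow N k *v x) \<in> span (w ` {..<CARD('n) - k - 1})"
      by (rule strictly_triangular_lowers_span[OF assms(2) _ Suc]) simp
    then show ?case by (simp add: matpow_Suc_mult_vector del: matpow.simps)
  qed
  from this[of "CARD('n)"] show ?thesis
    by (simp add: matrix_eq)
qed

lemma strictly_triangular_subdiagonal:
  fixes w :: "nat \<Rightarrow> real^'n::finite"
  assumes "strictly_triangular A w"
  obtains a where "\<forall>j. 0 < j \<and> j < CARD('n) \<longrightarrow> A *v w j - a j *\<^sub>R w (j - 1) \<in> span (w ` {..<j - 1})"
proof -
  have "\<exists>b. A *v w j - b *\<^sub>R w (j - 1) \<in> span (w ` {..<j - 1})" if "0 < j" "j < CARD('n)" for j
  proof -
    have "w ` {..<j} = insert (w (j - 1)) (w ` {..<j - 1})"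
      using \<open>0 < j\<close> by (metis Suc_pred' image_insert lessThan_Suc)
    then show ?thesis using assms that span_breakdown_eq by (metis strictly_triangular_def)
  qed
  then show thesis using that by metis
qed

lemma strictly_triangular_matpow_last_vector:
  fixes w :: "nat \<Rightarrow> real^'n::finite"
  assumes "strictly_triangular N w"
    and subdiagonal: "\<forall>j. 0 < j \<and> j < CARD('n) \<longrightarrow>
      c j \<noteq> 0 \<and> N *v w j - c j *\<^sub>R w (j - 1) \<in> span (w ` {..<j - 1})"
    and "k < CARD('n)"
  shows "\<exists>d. d \<noteq> 0 \<and>
    matpow N k *v w (CARD('n) - 1) - d *\<^sub>R w (CARD('n) - 1 - k) \<in> span (w ` {..<CARD('n) - 1 - k})"
  using assms(3)
proof (induction k)
  case 0
  show ?case by (intro exI[of _ 1]) (simp add: span_zero)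
next
  case (Suc k)
  define n where "n = CARD('n)"
  obtain d where "d \<noteq> 0" and
    y: "matpow N k *v w (n - 1) - d *\<^sub>R w (n - 1 - k) \<in> span (w ` {..<n - 1 - k})"
    using Suc by (auto simp: n_def)
  define j where "j = n - 1 - k"
  have j: "0 < j" "j < n" "j - 1 = n - 1 - Suc k" using Suc.prems unfolding j_def n_def by auto
  define y where "y = matpow N k *v w (n - 1) - d *\<^sub>R w j"
  have Ny: "N *v y \<in> span (w ` {..<j - 1})"
    using strictly_triangular_lowers_span[OF assms(1), of j y] y j n_def unfolding y_def j_def
    by simp
  define z where "z = N *v w j - c j *\<^sub>R w (j - 1)"
  have z: "z \<in> span (w ` {..<j - 1})" "c j \<noteq> 0"
    using subdiagonal j unfolding z_def n_def by auto
  have "matpow N (Suc k) *v w (n - 1) = N *v (d *\<^sub>R w j + y)"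
    unfolding y_def by (simp add: matpow_Suc_mult_vector del: matpow.simps)
  also have "\<dots> = (d * c j) *\<^sub>R w (j - 1) + (d *\<^sub>R z + N *v y)"
    unfolding z_def by (simp add: scaleR_matrix_vector_assoc algebra_simps)
  finally have "matpow N (Suc k) *v w (n - 1) - (d * c j) *\<^sub>R w (n - 1 - Suc k) = d *\<^sub>R z + N *v y"
    using j by simp
  moreover have "d *\<^sub>R z + N *v y \<in> span (w ` {..<j - 1})"
    using z Ny by (simp add: span_add span_scale)
  ultimately show ?case
    using \<open>d \<noteq> 0\<close> z j unfolding n_def by (intro exI[of _ "d * c j"]) auto
qed

lemma strictly_triangular_index:
  fixes w :: "nat \<Rightarrow> real^'n::finite"
  assumes "flag_basis w" "strictly_triangular N w"
    and "\<forall>j. 0 < j \<and> j < CARD('n) \<longrightarrow>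
      c j \<noteq> 0 \<and> N *v w j - c j *\<^sub>R w (j - 1) \<in> span (w ` {..<j - 1})"
  shows "matpow N (CARD('n) - 1) \<noteq> 0"
proof -
  obtain d where "d \<noteq> 0" "matpow N (CARD('n) - 1) *v w (CARD('n) - 1) - d *\<^sub>R w 0 \<in> span {}"
    using strictly_triangular_matpow_last_vector[OF assms(2,3), of "CARD('n) - 1"] by auto
  moreover have "w 0 \<noteq> 0"
    using assms(1)[unfolded flag_basis_def, rule_format, of 0] by auto
  ultimately have "matpow N (CARD('n) - 1) *v w (CARD('n) - 1) \<noteq> 0" by simp
  then show ?thesis by auto
qed

lemma nilpotent_regular_perturbation:
  fixes A :: "real^'n::finite^'n"
  assumes "matpow A k = 0"
  obtains M where "\<And>r. r > 0 \<Longrightarrow> \<exists>t. 0 < t \<and> t < r \<and> matpow (A + t *\<^sub>R M) CARD('n) = 0 \<and>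
           matpow (A + t *\<^sub>R M) (CARD('n) - 1) \<noteq> 0"
proof -
  obtain w where w: "flag_basis w" "strictly_triangular A w"
    using nilpotent_strictly_triangular[OF assms] .
  obtain M where M: "\<forall>j<CARD('n). M *v w j = (if j = 0 then 0 else w (j - 1))"
    using shift_matrix_exists[OF w(1)] .
  have "strictly_triangular M w"
    using M by (auto simp: strictly_triangular_def span_zero intro: span_base)
  then have tri: "strictly_triangular (A + t *\<^sub>R M) w" for t
    using w(2) by (rule strictly_triangular_add_scaleR[rotated])
  obtain a where a: "\<forall>j. 0 < j \<and> j < CARD('n) \<longrightarrow> A *v w j - a j *\<^sub>R w (j - 1) \<in> span (w ` {..<j - 1})"
    using strictly_triangular_subdiagonal[OF w(2)] .
  \<comment> \<open>The subdiagonal coefficients of A + tM are a j + t; only finitely many t make one vanish.\<close>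
  have "(A + t *\<^sub>R M) *v w j - (a j + t) *\<^sub>R w (j - 1) = A *v w j - a j *\<^sub>R w (j - 1)"
    if "0 < j" "j < CARD('n)" for j t
    using M that
    by (simp add: scaleR_matrix_vector_assoc[symmetric] algebra_simps)
  with a have subdiagonal: "\<forall>j. 0 < j \<and> j < CARD('n) \<longrightarrow> a j + t \<noteq> 0 \<and>
      (A + t *\<^sub>R M) *v w j - (a j + t) *\<^sub>R w (j - 1) \<in> span (w ` {..<j - 1})"
    if "t \<notin> (\<lambda>j. - a j) ` {..<CARD('n)}" for t
    using that by force
  show thesis
  proof (rule that)
    fix r :: real assume "r > 0"
    then have "infinite {0<..<r}" by simp
    then obtain t where "t \<in> {0<..<r}" "t \<notin> (\<lambda>j. - a j) ` {..<CARD('n)}"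
      by (metis finite_imageI finite_lessThan finite_subset subsetI)
    then show "\<exists>t. 0 < t \<and> t < r \<and> matpow (A + t *\<^sub>R M) CARD('n) = 0 \<and>
        matpow (A + t *\<^sub>R M) (CARD('n) - 1) \<noteq> 0"
      using strictly_triangular_nilpotent[OF w(1) tri]
        strictly_triangular_index[OF w(1) tri subdiagonal] by auto
  qed
qed

lemma continuous_on_det [continuous_intros]:
  fixes f :: "'a::topological_space \<Rightarrow> real^'n::finite^'n"
  assumes "continuous_on S f"
  shows "continuous_on S (\<lambda>x. det (f x))"
  unfolding det_def by (intro continuous_intros assms)

lemma matrix_inv_entry_cramer:
  fixes A :: "real^'n::finite^'n"
  assumes "det A \<noteq> 0"
  shows "matrix_inv A $ i $ j = det (\<chi> r c. if c = i then axis j 1 $ r else A $ r $ c) / det A"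
proof -
  have "A *v (matrix_inv A *v axis j 1) = axis j 1"
    using matrix_inv_right[of A] assms by (simp add: matrix_vector_mul_assoc invertible_det_nz)
  then have "(matrix_inv A *v axis j 1) $ i = det (\<chi> r c. if c = i then axis j 1 $ r else A $ r $ c) / det A"
    using cramer[OF assms] by simp
  moreover have "(matrix_inv A *v axis j 1) $ i = matrix_inv A $ i $ j"
    by (simp add: matrix_vector_mult_def axis_def if_distrib cong: if_cong)
  ultimately show ?thesis by simp
qed

lemma continuous_on_matrix_inv: "continuous_on {A::real^'n::finite^'n. det A \<noteq> 0} matrix_inv"
proof -
  have entry: "continuous_on S (\<lambda>A::real^'n^'n. if c = i then a else A $ r $ c)" for S c i a r
    by (cases "c = i") (simp_all add: continuous_on_component)
  have "continuous_on {A::real^'n^'n. det A \<noteq> 0}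
      (\<lambda>A. \<chi> i j. det (\<chi> r c. if c = i then axis j 1 $ r else A $ r $ c) / det A)"
    by (intro continuous_intros entry) auto
  then show ?thesis
    by (rule continuous_on_eq) (simp add: vec_eq_iff matrix_inv_entry_cramer)
qed

lemma has_derivative_matrix_inv_at_identity:
  "((\<lambda>K::real^'n::finite^'n. matrix_inv (mat 1 + K)) has_derivative uminus) (at 0)"
proof -
  let ?J = "\<lambda>K::real^'n^'n. matrix_inv (mat 1 + K)"
  obtain C where C: "C \<ge> 0" "\<forall>(a::real^'n^'n) (b::real^'n^'n). norm (a ** b) \<le> norm a * norm b * C"
    using matrix_mult.nonneg_bounded by blast
  have open_dom: "open {K::real^'n^'n. det (mat 1 + K) \<noteq> 0}"
    by (rule open_Collect_neq; intro continuous_intros)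
  have "continuous_on {K::real^'n^'n. det (mat 1 + K) \<noteq> 0} ?J"
    by (rule continuous_on_compose2[OF continuous_on_matrix_inv]) (intro continuous_intros | auto)+
  then have "isCont ?J 0"
    using open_dom by (simp add: continuous_on_eq_continuous_at)
  then have "((\<lambda>h. h ** ?J h) \<longlongrightarrow> (0::real^'n^'n) ** ?J 0) (at 0)"
    by (intro matrix_mult.tendsto tendsto_ident_at isContD)
  then have lim: "((\<lambda>h. C * norm (h ** ?J h)) \<longlongrightarrow> 0) (at 0)"
    by (intro tendsto_mult_right_zero tendsto_norm_zero) simp
  \<comment> \<open>From (I + h) J(h) = I one gets J(h) - I + h = h (h J(h)), which is quadratically small.\<close>
  have remainder: "?J h - ?J 0 - - h = h ** (h ** ?J h)" if "det (mat 1 + h) \<noteq> 0" for h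
  proof -
    have "(mat 1 + h) ** ?J h = mat 1"
      using that matrix_inv_right[of "mat 1 + h"] by (simp add: invertible_det_nz)
    then have "h ** ?J h = mat 1 - ?J h" by (simp add: matrix_add_rdistrib algebra_simps)
    then show ?thesis
      by (simp add: matrix_inv_mat_1 matrix_mult.diff_right)
  qed
  have "eventually (\<lambda>h::real^'n^'n. det (mat 1 + h) \<noteq> 0) (at 0)"
    using eventually_at_in_open'[OF open_dom, of 0] by simp
  then have "\<forall>\<^sub>F h in at 0. norm (norm (?J h - ?J 0 - - h) / norm h) \<le> C * norm (h ** ?J h)"
  proof eventually_elim
    case (elim h)
    have "norm (?J h - ?J 0 - - h) \<le> norm h * norm (h ** ?J h) * C"
      unfolding remainder[OF elim] by (rule C(2)[rule_format])
    then show ?case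
      using C(1) by (cases "h = 0") (auto simp: divide_le_eq mult_ac)
  qed
  then have "((\<lambda>h. norm (?J h - ?J 0 - - h) / norm h) \<longlongrightarrow> 0) (at 0)"
    by (rule Lim_null_comparison[OF _ lim])
  then show ?thesis
    unfolding has_derivative_at by (auto intro: bounded_linear_minus bounded_linear_ident)
qed

definition on_zeros :: "real^'n::finite^'n \<Rightarrow> real^'n^'n \<Rightarrow> real^'n^'n" where
  "on_zeros A X = (\<chi> i j. if A $ i $ j = 0 then X $ i $ j else 0)"

definition off_zeros :: "real^'n::finite^'n \<Rightarrow> real^'n^'n \<Rightarrow> real^'n^'n" where
  "off_zeros A X = (\<chi> i j. if A $ i $ j = 0 then 0 else X $ i $ j)"

definition transpose_commutator :: "real^'n::finite^'n \<Rightarrow> real^'n^'n \<Rightarrow> real^'n^'n" where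
  "transpose_commutator A X = A ** transpose X - transpose X ** A"

lemma bounded_linear_on_zeros: "bounded_linear (on_zeros A)"
  by (intro linear_conv_bounded_linear[THEN iffD1] linearI) (auto simp: on_zeros_def vec_eq_iff)

lemma bounded_linear_off_zeros: "bounded_linear (off_zeros A)"
  by (intro linear_conv_bounded_linear[THEN iffD1] linearI) (auto simp: off_zeros_def vec_eq_iff)

lemma on_zeros_add_off_zeros: "on_zeros A X + off_zeros A X = X"
  by (simp add: on_zeros_def off_zeros_def vec_eq_iff)

lemma on_zeros_self: "on_zeros A A = 0"
  by (simp add: on_zeros_def vec_eq_iff)

lemma on_zeros_0: "on_zeros A 0 = 0"
  by (simp add: on_zeros_def vec_eq_iff)

lemma off_zeros_0: "off_zeros A 0 = 0"
  by (simp add: off_zeros_def vec_eq_iff)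

lemma on_zeros_eq_0_if_add_off_zeros:
  assumes "on_zeros A X + off_zeros A Y = 0"
  shows "on_zeros A X = 0"
proof -
  have "X $ i $ j = 0" if "A $ i $ j = 0" for i j
    using arg_cong[OF assms, of "\<lambda>Z. Z $ i $ j"] that by (simp add: on_zeros_def off_zeros_def)
  then show ?thesis by (simp add: on_zeros_def vec_eq_iff)
qed

lemma off_zeros_eq_0_iff: "off_zeros A X = 0 \<longleftrightarrow> hadamard A X = 0"
  by (auto simp: off_zeros_def hadamard_def vec_eq_iff)

lemma inner_on_zeros_commute: "inner X (on_zeros A Y) = inner (on_zeros A X) Y"
  unfolding inner_vec_def on_zeros_def by (intro sum.cong refl) auto

lemma inner_off_zeros_self: "inner X (off_zeros A X) = norm (off_zeros A X) ^ 2"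
  by (simp add: power2_norm_eq_inner inner_vec_def off_zeros_def if_distrib cong: if_cong)

lemma transpose_add: "transpose (X + Y) = transpose X + transpose (Y::'a::semiring_1^'n^'m)"
  by (simp add: transpose_def vec_eq_iff)

lemma transpose_diff: "transpose (X - Y) = transpose X - transpose (Y::'a::ring_1^'n^'m)"
  by (simp add: transpose_def vec_eq_iff)

lemma transpose_eq_0_iff: "transpose X = 0 \<longleftrightarrow> X = (0::'a::zero^'n^'m)"
  by (simp add: transpose_def vec_eq_iff) blast

lemma bounded_bilinear_transpose_commutator: "bounded_bilinear transpose_commutator"
  unfolding bilinear_conv_bounded_bilinear[symmetric] bilinear_def transpose_commutator_def
  by (auto intro!: linearI simp: matrix_add_ldistrib matrix_add_rdistrib transpose_add transpose_scalar
      scalar_matrix_assoc[symmetric] matrix_scalar_ac algebra_simps)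

lemma nSSP_iff_off_zeros:
  "nSSP A \<longleftrightarrow> (\<forall>X. off_zeros A X = 0 \<and> transpose_commutator A X = 0 \<longrightarrow> X = 0)"
  by (simp add: nSSP_def off_zeros_eq_0_iff transpose_commutator_def)

lemma inner_transpose: "inner (transpose X) (transpose Y) = inner X (Y::real^'n::finite^'n)"
  unfolding inner_vec_def transpose_def by (simp, rule sum.swap)

lemma inner_matrix_mult_right:
  fixes X K A :: "real^'n::finite^'n"
  shows "inner X (K ** A) = inner (X ** transpose A) K"
  unfolding inner_vec_def matrix_matrix_mult_def transpose_def
  by (simp add: sum_distrib_left sum_distrib_right, rule sum.cong[OF refl], rule trans[OF sum.swap])
    (simp add: mult_ac)

lemma inner_matrix_mult_left:
  fixes X K A :: "real^'n::finite^'n"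
  shows "inner X (A ** K) = inner (transpose A ** X) K"
proof -
  have "inner X (A ** K) = inner (transpose X) (transpose K ** transpose A)"
    by (simp only: inner_transpose matrix_transpose_mul[symmetric])
  also have "\<dots> = inner (transpose X ** A) (transpose K)"
    using inner_matrix_mult_right[of "transpose X" "transpose K" "transpose A"] by simp
  also have "\<dots> = inner (transpose A ** X) K"
    using inner_transpose[of "transpose A ** X" K] by (simp add: matrix_transpose_mul)
  finally show ?thesis .
qed

lemma inner_commutator_eq:
  fixes A K Y :: "real^'n::finite^'n"
  shows "inner Y (K ** A - A ** K) = inner (transpose (transpose_commutator A Y)) K"
proof -
  have "inner Y (K ** A - A ** K) = inner (Y ** transpose A) K - inner (transpose A ** Y) K"
    by (simp only: inner_diff_right inner_matrix_mult_right[of Y K A] inner_matrix_mult_left[of Y A K])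
  then show ?thesis
    by (simp add: inner_diff_left transpose_commutator_def transpose_diff matrix_transpose_mul)
qed

definition tangent_map :: "real^'n::finite^'n \<Rightarrow> (real^'n^'n) \<times> (real^'n^'n) \<Rightarrow> real^'n^'n" where
  "tangent_map A p = on_zeros A (fst p ** A - A ** fst p) + off_zeros A (snd p)"

lemma bounded_linear_tangent_map: "bounded_linear (tangent_map A)"
  unfolding tangent_map_def
  by (intro bounded_linear_add bounded_linear_sub
      bounded_linear_compose[OF bounded_linear_on_zeros]
      bounded_linear_compose[OF bounded_linear_off_zeros]
      bounded_linear_compose[OF matrix_mult.bounded_linear_left]
      bounded_linear_compose[OF matrix_mult.bounded_linear_right]
      bounded_linear_fst bounded_linear_snd)

lemma nSSP_tangent_map_surj:
  fixes A :: "real^'n::finite^'n"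
  assumes "nSSP A"
  shows "surj (tangent_map A)"
proof (rule ccontr)
  \<comment> \<open>A nonzero Y orthogonal to the range is supported on the zero pattern of A and, by
    inner_commutator_eq, satisfies A Y^T = Y^T A; the nSSP rules this out.\<close>
  assume "\<not> surj (tangent_map A)"
  have "span (range (tangent_map A)) = range (tangent_map A)"
    using linear_subspace_image[OF bounded_linear.linear[OF bounded_linear_tangent_map] subspace_UNIV]
    by simp
  with \<open>\<not> surj (tangent_map A)\<close> have "span (range (tangent_map A)) \<noteq> UNIV" by metis
  then have "dim (range (tangent_map A)) < DIM(real^'n^'n)"
    using dim_eq_full[of "range (tangent_map A)"] dim_subset_UNIV[of "range (tangent_map A)"]
    by linarith
  then obtain Y where "Y \<noteq> 0" and Y: "\<And>y. y \<in> span (range (tangent_map A)) \<Longrightarrow> orthogonal Y y"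
    using orthogonal_to_subspace_exists by blast
  have orth: "inner Y (on_zeros A (K ** A - A ** K) + off_zeros A V) = 0" for K V
    using Y[OF span_base[OF rangeI[of "tangent_map A" "(K, V)"]]]
    by (simp add: orthogonal_def tangent_map_def)
  have "norm (off_zeros A Y) ^ 2 = 0"
    using orth[of "0::real^'n^'n" Y]
    by (simp add: on_zeros_0 inner_off_zeros_self)
  then have off: "off_zeros A Y = 0" by simp
  then have "on_zeros A Y = Y" using on_zeros_add_off_zeros[of A Y] by simp
  then have "inner Y (on_zeros A X) = inner Y X" for X by (simp add: inner_on_zeros_commute)
  then have "inner Y (K ** A - A ** K) = 0" for K
    using orth[of K 0] by (simp add: off_zeros_0)
  from this[of "transpose (transpose_commutator A Y)"] have "transpose_commutator A Y = 0"
    by (simp add: inner_commutator_eq transpose_eq_0_iff)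
  with off assms have "Y = 0" unfolding nSSP_iff_off_zeros by blast
  with \<open>Y \<noteq> 0\<close> show False ..
qed

lemma tangent_map_right_inverse:
  fixes A M :: "real^'n::finite^'n"
  assumes "nSSP A"
  obtains g' where "bounded_linear g'"
    "(\<lambda>h. (fst h, fst h *\<^sub>R on_zeros A M + tangent_map A (snd h))) \<circ> g' = id"
proof -
  obtain g where "linear g" and g: "tangent_map A \<circ> g = id"
    using linear_surjective_right_inverse[OF bounded_linear.linear[OF bounded_linear_tangent_map]
        nSSP_tangent_map_surj[OF assms]] by blast
  show thesis
  proof (rule that[of "\<lambda>p. (fst p, g (snd p - fst p *\<^sub>R on_zeros A M))"])
    show "bounded_linear (\<lambda>p. (fst p, g (snd p - fst p *\<^sub>R on_zeros A M)))"
    proof (intro bounded_linear_Pair bounded_linear_fst)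
      have inner: "bounded_linear (\<lambda>p::real \<times> (real^'n^'n). snd p - fst p *\<^sub>R on_zeros A M)"
        by (intro bounded_linear_sub bounded_linear_snd
            bounded_linear_compose[OF bounded_linear_scaleR_left bounded_linear_fst])
      have "bounded_linear g" using \<open>linear g\<close> by (simp add: linear_conv_bounded_linear)
      from bounded_linear_compose[OF this inner]
      show "bounded_linear (\<lambda>p. g (snd p - fst p *\<^sub>R on_zeros A M))" .
    qed
    show "(\<lambda>h. (fst h, fst h *\<^sub>R on_zeros A M + tangent_map A (snd h))) \<circ>
        (\<lambda>p. (fst p, g (snd p - fst p *\<^sub>R on_zeros A M))) = id"
      using g by (simp add: fun_eq_iff pointfree_idE)
  qed
qed

lemma off_zeros_cong: "(\<And>i j. B $ i $ j = 0 \<longleftrightarrow> A $ i $ j = 0) \<Longrightarrow> off_zeros B = off_zeros A"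
  by (simp add: off_zeros_def fun_eq_iff)

lemma nSSP_stable:
  fixes A :: "real^'n::finite^'n"
  assumes "nSSP A"
  obtains e where "e > 0"
    "\<And>B. dist B A < e \<Longrightarrow> (\<And>i j. B $ i $ j = 0 \<longleftrightarrow> A $ i $ j = 0) \<Longrightarrow> nSSP B"
proof -
  \<comment> \<open>transpose_commutator A is bounded below on matrices supported on the zero pattern, and
    replacing A by B changes it by the bounded bilinear term transpose_commutator (A - B).\<close>
  interpret tc: bounded_bilinear transpose_commutator
    by (rule bounded_bilinear_transpose_commutator)
  define S where "S = {X::real^'n^'n. off_zeros A X = 0}"
  have "closed S" unfolding S_def
    by (intro closed_Collect_eq continuous_on_const linear_continuous_on bounded_linear_off_zeros)
  moreover have "subspace S" unfolding S_def
    by (rule linear_subspace_kernel[OF bounded_linear.linear[OF bounded_linear_off_zeros]])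
  moreover have "\<forall>X\<in>S. transpose_commutator A X = 0 \<longrightarrow> X = 0"
    using assms unfolding nSSP_iff_off_zeros S_def by blast
  ultimately obtain c where "c > 0" and c: "\<forall>X\<in>S. c * norm X \<le> norm (transpose_commutator A X)"
    using injective_imp_isometric[OF _ _ tc.bounded_linear_right] by blast
  obtain K where "K \<ge> 0"
    and K: "\<forall>(M::real^'n^'n) (X::real^'n^'n). norm (transpose_commutator M X) \<le> norm M * norm X * K"
    using tc.nonneg_bounded by blast
  show thesis
  proof (rule that[of "c / (K + 1)"])
    show "c / (K + 1) > 0" using \<open>c > 0\<close> \<open>K \<ge> 0\<close> by simp
    fix B :: "real^'n^'n"
    assume "dist B A < c / (K + 1)" and pattern: "\<And>i j. B $ i $ j = 0 \<longleftrightarrow> A $ i $ j = 0"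
    then have "norm (A - B) * K < c"
      using \<open>c > 0\<close> \<open>K \<ge> 0\<close>
      by (simp add: dist_norm norm_minus_commute field_simps)
        (use norm_ge_zero[of "A - B"] in linarith)
    show "nSSP B" unfolding nSSP_iff_off_zeros
    proof (intro allI impI)
      fix X assume X: "off_zeros B X = 0 \<and> transpose_commutator B X = 0"
      then have "X \<in> S" using off_zeros_cong[OF pattern] by (simp add: S_def)
      have "c * norm X \<le> norm (transpose_commutator A X)" using c \<open>X \<in> S\<close> by blast
      also have "\<dots> = norm (transpose_commutator (A - B) X)" using X by (simp add: tc.diff_left)
      also have "\<dots> \<le> norm (A - B) * norm X * K" using K by blast
      finally have le: "c * norm X \<le> norm (A - B) * K * norm X" by (simp add: mult_ac)
      show "X = 0"
      proof (rule ccontr)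
        assume "X \<noteq> 0"
        with le have "c \<le> norm (A - B) * K" by simp
        with \<open>norm (A - B) * K < c\<close> show False by simp
      qed
    qed
  qed
qed

definition conjugate_perturbation ::
  "real^'n::finite^'n \<Rightarrow> real^'n^'n \<Rightarrow> real \<times> (real^'n^'n) \<Rightarrow> real^'n^'n" where
  "conjugate_perturbation A M x = (mat 1 + snd x) ** (A + fst x *\<^sub>R M) ** matrix_inv (mat 1 + snd x)"

lemma conjugate_perturbation_0: "conjugate_perturbation A M 0 = A"
  by (simp add: conjugate_perturbation_def matrix_inv_mat_1)

lemma continuous_on_conjugate_perturbation:
  "continuous_on {x. det (mat 1 + snd x) \<noteq> 0} (conjugate_perturbation A M)"
proof -
  have "continuous_on {x. det (mat 1 + snd x) \<noteq> 0} (\<lambda>x::real \<times> (real^'n^'n). matrix_inv (mat 1 + snd x))"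
    by (rule continuous_on_compose2[OF continuous_on_matrix_inv]) (intro continuous_intros | auto)+
  then show ?thesis
    unfolding conjugate_perturbation_def
    by (intro matrix_mult.continuous_on continuous_intros)
qed

lemma has_derivative_conjugate_perturbation:
  "(conjugate_perturbation A M has_derivative (\<lambda>h. fst h *\<^sub>R M + snd h ** A - A ** snd h)) (at 0)"
proof -
  have "((\<lambda>K. matrix_inv (mat 1 + K)) has_derivative uminus) (at (snd (0::real \<times> (real^'n^'n))))"
    using has_derivative_matrix_inv_at_identity by simp
  from diff_chain_at[OF has_derivative_snd[OF has_derivative_ident] this]
  have J: "((\<lambda>x::real \<times> (real^'n^'n). matrix_inv (mat 1 + snd x)) has_derivative (\<lambda>h. - snd h)) (at 0)"
    by (simp add: o_def)
  have U: "((\<lambda>x::real \<times> (real^'n^'n). mat 1 + snd x) has_derivative snd) (at 0)"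
    by (auto intro!: derivative_eq_intros)
  have N: "((\<lambda>x::real \<times> (real^'n^'n). A + fst x *\<^sub>R M) has_derivative (\<lambda>h. fst h *\<^sub>R M)) (at 0)"
    by (auto intro!: derivative_eq_intros)
  from matrix_mult.FDERIV[OF matrix_mult.FDERIV[OF U N] J] show ?thesis
    unfolding conjugate_perturbation_def[abs_def]
    by (rule has_derivative_eq_rhs)
      (simp add: fun_eq_iff matrix_inv_mat_1 matrix_mult.minus_right matrix_add_rdistrib)
qed

text \<open>
  The last component of the argument of pattern_map is a slack variable filling the entries off
  the zero pattern of A; it makes the derivative at 0 onto exactly when A has the nSSP. A point
  mapped to (t, 0) yields a conjugate of A + tM that vanishes on the zero pattern of A.
\<close>

definition pattern_map ::
  "real^'n::finite^'n \<Rightarrow> real^'n^'n \<Rightarrow> real \<times> ((real^'n^'n) \<times> (real^'n^'n)) \<Rightarrow> real \<times> (real^'n^'n)" where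
  "pattern_map A M y =
    (fst y, on_zeros A (conjugate_perturbation A M (fst y, fst (snd y))) + off_zeros A (snd (snd y)))"

lemma has_derivative_pattern_map:
  fixes A M :: "real^'n::finite^'n"
  shows "(pattern_map A M has_derivative
    (\<lambda>h. (fst h, fst h *\<^sub>R on_zeros A M + tangent_map A (snd h)))) (at 0)"
proof -
  let ?p = "\<lambda>y::real \<times> ((real^'n^'n) \<times> (real^'n^'n)). (fst y, fst (snd y))"
  have P: "(?p has_derivative ?p) (at 0)"
    by (auto intro!: derivative_eq_intros)
  have C: "(conjugate_perturbation A M has_derivative
      (\<lambda>h. fst h *\<^sub>R M + snd h ** A - A ** snd h)) (at (?p 0))"
    using has_derivative_conjugate_perturbation by (simp add: zero_prod_def)
  from diff_chain_at[OF P C]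
  have "((\<lambda>y. conjugate_perturbation A M (?p y)) has_derivative
      (\<lambda>h. fst h *\<^sub>R M + fst (snd h) ** A - A ** fst (snd h))) (at 0)"
    by (simp add: o_def)
  then have C': "((\<lambda>y. on_zeros A (conjugate_perturbation A M (?p y))) has_derivative
      (\<lambda>h. on_zeros A (fst h *\<^sub>R M + fst (snd h) ** A - A ** fst (snd h)))) (at 0)"
    by (rule bounded_linear.has_derivative[OF bounded_linear_on_zeros])
  have "bounded_linear (\<lambda>y::real \<times> ((real^'n^'n) \<times> (real^'n^'n)). off_zeros A (snd (snd y)))"
    by (intro bounded_linear_compose[OF bounded_linear_off_zeros]
        bounded_linear_compose[OF bounded_linear_snd bounded_linear_snd])
  then have V: "((\<lambda>y::real \<times> ((real^'n^'n) \<times> (real^'n^'n)). off_zeros A (snd (snd y)))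
      has_derivative (\<lambda>h. off_zeros A (snd (snd h)))) (at 0)"
    by (rule bounded_linear_imp_has_derivative)
  have "(pattern_map A M has_derivative (\<lambda>h. (fst h,
      on_zeros A (fst h *\<^sub>R M + fst (snd h) ** A - A ** fst (snd h)) + off_zeros A (snd (snd h)))))
      (at 0)"
    unfolding pattern_map_def[abs_def]
    by (intro has_derivative_Pair has_derivative_add C' V has_derivative_fst has_derivative_ident)
  then show ?thesis
    by (rule has_derivative_eq_rhs)
      (simp add: fun_eq_iff tangent_map_def on_zeros_def vec_eq_iff algebra_simps)
qed

lemma pattern_map_0: "pattern_map A M 0 = 0"
proof -
  have "conjugate_perturbation A M (fst 0, fst (snd 0)) = A"
    using conjugate_perturbation_0 by (simp add: zero_prod_def)
  then show ?thesis by (simp add: pattern_map_def on_zeros_self off_zeros_0 prod_eq_iff)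
qed

lemma continuous_on_pattern_map:
  "continuous_on {y. det (mat 1 + fst (snd y)) \<noteq> 0} (pattern_map A M)"
proof -
  let ?D = "{y::real \<times> ((real^'n^'n) \<times> (real^'n^'n)). det (mat 1 + fst (snd y)) \<noteq> 0}"
  have "continuous_on ?D (\<lambda>y. conjugate_perturbation A M (fst y, fst (snd y)))"
    by (rule continuous_on_compose2[OF continuous_on_conjugate_perturbation])
      (intro continuous_intros | auto)+
  then have "continuous_on ?D (\<lambda>y. on_zeros A (conjugate_perturbation A M (fst y, fst (snd y))))"
    by (rule continuous_on_compose2[OF linear_continuous_on[OF bounded_linear_on_zeros]]) auto
  moreover have "continuous_on ?D (\<lambda>y. off_zeros A (snd (snd y)))"
    by (rule continuous_on_compose2[OF linear_continuous_on[OF bounded_linear_off_zeros]])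
      (intro continuous_intros | auto)+
  ultimately show ?thesis
    unfolding pattern_map_def[abs_def]
    by (rule continuous_on_Pair[OF continuous_on_fst[OF continuous_on_id] continuous_on_add])
qed

lemma pattern_map_eq_Pair_0:
  assumes "pattern_map A M y = (t, 0)"
  shows "conjugate_perturbation A M (fst y, fst (snd y)) =
      (mat 1 + fst (snd y)) ** (A + t *\<^sub>R M) ** matrix_inv (mat 1 + fst (snd y))"
    and "on_zeros A (conjugate_perturbation A M (fst y, fst (snd y))) = 0"
proof -
  have "fst y = t"
    and sum: "on_zeros A (conjugate_perturbation A M (fst y, fst (snd y))) + off_zeros A (snd (snd y)) = 0"
    using assms unfolding pattern_map_def prod.inject by blast+
  then show "conjugate_perturbation A M (fst y, fst (snd y)) =
      (mat 1 + fst (snd y)) ** (A + t *\<^sub>R M) ** matrix_inv (mat 1 + fst (snd y))"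
    by (simp add: conjugate_perturbation_def)
  from sum show "on_zeros A (conjugate_perturbation A M (fst y, fst (snd y))) = 0"
    by (rule on_zeros_eq_0_if_add_off_zeros)
qed

lemma nSSP_conjugate_onto_pattern:
  fixes A M :: "real^'n::finite^'n"
  assumes "nSSP A" "e > 0"
  obtains r where "r > 0"
    "\<And>t. 0 < t \<Longrightarrow> t < r \<Longrightarrow> \<exists>S. invertible S \<and> dist (S ** (A + t *\<^sub>R M) ** matrix_inv S) A < e \<and>
       on_zeros A (S ** (A + t *\<^sub>R M) ** matrix_inv S) = 0"
proof -
  let ?C = "\<lambda>y::real \<times> ((real^'n^'n) \<times> (real^'n^'n)). conjugate_perturbation A M (fst y, fst (snd y))"
  define D where "D = {y::real \<times> ((real^'n^'n) \<times> (real^'n^'n)). det (mat 1 + fst (snd y)) \<noteq> 0}"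
  have "open D" unfolding D_def
    by (rule open_Collect_neq; intro continuous_intros)
  have "continuous_on D ?C"
    by (rule continuous_on_compose2[OF continuous_on_conjugate_perturbation])
      (intro continuous_intros | auto simp: D_def)+
  define T where "T = ?C -` ball A e \<inter> D"
  have "open T"
    unfolding T_def by (rule continuous_on_open_vimage[THEN iffD1, rule_format, OF \<open>open D\<close>
        \<open>continuous_on D ?C\<close> open_ball])
  moreover have "0 \<in> T"
    using \<open>e > 0\<close> conjugate_perturbation_0[of A M] by (simp add: T_def D_def zero_prod_def)
  ultimately have "0 \<in> interior T" by (simp add: interior_open)
  obtain g' where "bounded_linear g'"
    "(\<lambda>h. (fst h, fst h *\<^sub>R on_zeros A M + tangent_map A (snd h))) \<circ> g' = id"
    using tangent_map_right_inverse[OF assms(1)] .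
  from sussmann_open_mapping[OF \<open>open D\<close> continuous_on_pattern_map[of A M, folded D_def] _
      has_derivative_pattern_map this _ \<open>0 \<in> interior T\<close>]
  have "0 \<in> interior (pattern_map A M ` T)"
    using \<open>0 \<in> T\<close> by (simp add: T_def pattern_map_0)
  then obtain r where "r > 0" and r: "ball 0 r \<subseteq> pattern_map A M ` T"
    unfolding mem_interior by blast
  show thesis
  proof (rule that[OF \<open>r > 0\<close>])
    fix t :: real assume "0 < t" "t < r"
    then have "(t, 0) \<in> ball (0::real \<times> (real^'n^'n)) r" by (simp add: dist_norm norm_Pair)
    with r have "(t, 0) \<in> pattern_map A M ` T" by (rule subsetD)
    then obtain y where "pattern_map A M y = (t, 0)" and "y \<in> T" by (metis imageE)
    moreover define S where "S = mat 1 + fst (snd y)"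
    ultimately have "invertible S" "dist (S ** (A + t *\<^sub>R M) ** matrix_inv S) A < e"
      "on_zeros A (S ** (A + t *\<^sub>R M) ** matrix_inv S) = 0"
      using pattern_map_eq_Pair_0[of A M y t]
      by (simp_all add: T_def D_def invertible_det_nz dist_commute)
    then show "\<exists>S. invertible S \<and> dist (S ** (A + t *\<^sub>R M) ** matrix_inv S) A < e \<and>
        on_zeros A (S ** (A + t *\<^sub>R M) ** matrix_inv S) = 0"
      by blast
  qed
qed

lemma qual_class_stable:
  fixes A :: "real^'n::finite^'n"
  assumes "A \<in> qual_class P"
  obtains e where "e > 0"
    "\<And>B. dist B A < e \<Longrightarrow> on_zeros A B = 0 \<Longrightarrow>
       B \<in> qual_class P \<and> (\<forall>i j. B $ i $ j = 0 \<longleftrightarrow> A $ i $ j = 0)"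
proof -
  define E where "E = (\<lambda>(i, j). \<bar>A $ i $ j\<bar>) ` {(i, j). A $ i $ j \<noteq> 0}"
  have "finite E" by (simp add: E_def)
  have "x > 0" if "x \<in> E" for x using that by (auto simp: E_def)
  then have "Min (insert 1 E) > 0" using \<open>finite E\<close> by simp
  moreover have "Min (insert 1 E) \<le> \<bar>A $ i $ j\<bar>" if "A $ i $ j \<noteq> 0" for i j
    using \<open>finite E\<close> that by (intro Min_le) (auto simp: E_def)
  moreover have "\<bar>B $ i $ j - A $ i $ j\<bar> \<le> dist B A" for B i j
    using Finite_Cartesian_Product.norm_nth_le[of "B - A" i]
      Finite_Cartesian_Product.norm_nth_le[of "(B - A) $ i" j]
    by (simp add: dist_norm)
  ultimately have close: "\<bar>B $ i $ j - A $ i $ j\<bar> < \<bar>A $ i $ j\<bar>"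
    if "dist B A < Min (insert 1 E)" "A $ i $ j \<noteq> 0" for B i j
    using that by (meson le_less_trans less_le_trans)
  show thesis
  proof (rule that[OF \<open>Min (insert 1 E) > 0\<close>])
    fix B assume "dist B A < Min (insert 1 E)" "on_zeros A B = 0"
    have "B $ i $ j = 0" if "A $ i $ j = 0" for i j
      using arg_cong[OF \<open>on_zeros A B = 0\<close>, of "\<lambda>X. X $ i $ j"] that by (simp add: on_zeros_def)
    then have entry: "(A $ i $ j = 0 \<longrightarrow> B $ i $ j = 0) \<and>
        (A $ i $ j > 0 \<longrightarrow> B $ i $ j > 0) \<and> (A $ i $ j < 0 \<longrightarrow> B $ i $ j < 0)" for i j
      using close[OF \<open>dist B A < Min (insert 1 E)\<close>, of i j] by (auto simp: abs_if split: if_splits)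
    have "has_sign (B $ i $ j) (P $ i $ j)" for i j
    proof -
      have "has_sign (A $ i $ j) (P $ i $ j)" using assms by (simp add: qual_class_def)
      then show ?thesis using entry[of i j] by (cases "P $ i $ j") (auto simp: has_sign_def)
    qed
    then show "B \<in> qual_class P \<and> (\<forall>i j. B $ i $ j = 0 \<longleftrightarrow> A $ i $ j = 0)"
      using entry by (auto simp: qual_class_def) (metis less_irrefl linorder_neqE_linordered_idom)
  qed
qed

lemma qual_class_nSSP_stable:
  fixes A :: "real^'n::finite^'n"
  assumes "A \<in> qual_class P" "nSSP A"
  obtains e where "e > 0" "\<And>B. dist B A < e \<Longrightarrow> on_zeros A B = 0 \<Longrightarrow> B \<in> qual_class P \<and> nSSP B"
proof -
  obtain e1 where "e1 > 0" and e1: "\<And>B. dist B A < e1 \<Longrightarrow>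
      (\<And>i j. B $ i $ j = 0 \<longleftrightarrow> A $ i $ j = 0) \<Longrightarrow> nSSP B"
    using nSSP_stable[OF assms(2)] by blast
  obtain e2 where "e2 > 0" and e2: "\<And>B. dist B A < e2 \<Longrightarrow> on_zeros A B = 0 \<Longrightarrow>
      B \<in> qual_class P \<and> (\<forall>i j. B $ i $ j = 0 \<longleftrightarrow> A $ i $ j = 0)"
    using qual_class_stable[OF assms(1)] by blast
  show thesis
  proof (rule that[of "min e1 e2"])
    show "min e1 e2 > 0" using \<open>e1 > 0\<close> \<open>e2 > 0\<close> by simp
    fix B assume "dist B A < min e1 e2" "on_zeros A B = 0"
    then show "B \<in> qual_class P \<and> nSSP B" using e1 e2 by simp
  qed
qed

theorem corollary5p9:
  fixes P :: "'n::finite sign_pattern"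
  assumes "\<exists>A \<in> qual_class P. nilpotent_mat A \<and> nSSP A"
  shows "\<exists>A' \<in> qual_class P. nilpotent_mat A' \<and> matpow A' (CARD('n) - 1) \<noteq> 0 \<and> nSSP A'"
proof -
  obtain A k where A: "A \<in> qual_class P" "nSSP A" and "matpow A k = 0"
    using assms unfolding nilpotent_mat_def by blast
  obtain M where M: "\<And>r. r > 0 \<Longrightarrow> \<exists>t. 0 < t \<and> t < r \<and> matpow (A + t *\<^sub>R M) CARD('n) = 0 \<and>
      matpow (A + t *\<^sub>R M) (CARD('n) - 1) \<noteq> 0"
    using nilpotent_regular_perturbation[OF \<open>matpow A k = 0\<close>] by blast
  obtain e where "e > 0" and stable: "\<And>B. dist B A < e \<Longrightarrow> on_zeros A B = 0 \<Longrightarrow>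
      B \<in> qual_class P \<and> nSSP B"
    using qual_class_nSSP_stable[OF A] by blast
  obtain r where "r > 0" and r: "\<And>t. 0 < t \<Longrightarrow> t < r \<Longrightarrow> \<exists>S. invertible S \<and>
      dist (S ** (A + t *\<^sub>R M) ** matrix_inv S) A < e \<and> on_zeros A (S ** (A + t *\<^sub>R M) ** matrix_inv S) = 0"
    using nSSP_conjugate_onto_pattern[OF A(2) \<open>e > 0\<close>] by blast
  obtain t where t: "0 < t" "t < r" "matpow (A + t *\<^sub>R M) CARD('n) = 0"
    "matpow (A + t *\<^sub>R M) (CARD('n) - 1) \<noteq> 0"
    using M[OF \<open>r > 0\<close>] by blast
  then obtain S where "invertible S" and B: "S ** (A + t *\<^sub>R M) ** matrix_inv S \<in> qual_class P"
    "nSSP (S ** (A + t *\<^sub>R M) ** matrix_inv S)"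
    using r stable by blast
  moreover have "matpow (S ** (A + t *\<^sub>R M) ** matrix_inv S) CARD('n) = 0"
    "matpow (S ** (A + t *\<^sub>R M) ** matrix_inv S) (CARD('n) - 1) \<noteq> 0"
    using t(3,4) by (simp_all add: matpow_conjugate[OF \<open>invertible S\<close>] conjugate_eq_0_iff[OF \<open>invertible S\<close>])
  ultimately show ?thesis unfolding nilpotent_mat_def by blast
qed

end
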